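(* Let $\alpha=(\alpha_1,\ldots,\alpha_m)$ be a partition of $n$ and let $r\in\mathbb{N}$ with $r\ge 1$. Then there is a natural isomorphism of species $$\mathbf{C}_{\alpha}\circ X^r=\mathbf{C}_{\alpha^r},$$ where $\alpha^r$ is the partition of $nr$ containing exactly $r$ copies of each part $\alpha_i$ of $\alpha$.
   Context: A (combinatorial) species is a functor from the category of finite sets with bijections to the category of finite sets with maps; equality of species means natural isomorphism. For a subgroup $H\le S_n$, the molecular species $X^n/H$ is defined by $(X^n/H)[U]=\{\lambda H:\lambda:[n]\to U \text{ a bijection}\}$, where $\lambda H=\{\lambda\circ f: f\in H\}$, and $(X^n/H)[\tau](\lambda H)=(\tau\circ\lambda)H$ for a bijection $\tau:U\to V$. For a partition $\alpha=(\alpha_1,\ldots,\alpha_k)$ of $n$, the standard permutation $\sigma_\alpha\in S_n$ is $(1,\ldots,\alpha_1)(\alpha_1+1,\ldots,\alpha_1+\alpha_2)\cdots$, i.e. the cycles of lengths $\alpha_1,\ldots,\alpha_k$ are filled with $1,\ldots,n$ in increasing order; and $\mathbf{C}_\alpha:=X^n/\langle\sigma_\alpha\rangle$. $X^r$ is the species of lists of length $r$ ($X^r[U]$ = set of bijections $[r]\to U$ if $|U|=r$, empty otherwise). For species $F,G$ with $G[\emptyset]=\emptyset$, the composition is $(F\circ G)[U]=\bigsqcup_{\pi}F[\pi]\times\prod_{B\in\pi}G[B]$, the union over set partitions $\pi$ of $U$, with the induced transport of structure. *)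

theory Defs
  imports Main "HOL-Library.FuncSet" "HOL-Library.Disjoint_Sets"
begin

text \<open>A species on label type 'a is given by a structure map S (finite label set U
  to the set of structures on U) and a transport map T: T tau U s is the transport of
  s in S U along a bijection tau from U onto tau ` U.\<close>

definition nat_iso ::
  "('a set \<Rightarrow> 's set) \<Rightarrow> (('a \<Rightarrow> 'a) \<Rightarrow> 'a set \<Rightarrow> 's \<Rightarrow> 's)
   \<Rightarrow> ('a set \<Rightarrow> 't set) \<Rightarrow> (('a \<Rightarrow> 'a) \<Rightarrow> 'a set \<Rightarrow> 't \<Rightarrow> 't) \<Rightarrow> bool" where
  "nat_iso S1 T1 S2 T2 \<longleftrightarrow>
     (\<exists>\<phi> :: 'a set \<Rightarrow> 's \<Rightarrow> 't.
        (\<forall>U. finite U \<longrightarrow> bij_betw (\<phi> U) (S1 U) (S2 U)) \<and>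
        (\<forall>U V \<tau>. finite U \<and> bij_betw \<tau> U V \<longrightarrow>
            (\<forall>s\<in>S1 U. \<phi> V (T1 \<tau> U s) = T2 \<tau> U (\<phi> U s))))"

definition bijs_from :: "nat \<Rightarrow> 'a set \<Rightarrow> (nat \<Rightarrow> 'a) set" where
  "bijs_from n U = {l. l \<in> extensional {1..n} \<and> bij_betw l {1..n} U}"

text \<open>Species X^r of lists.\<close>
definition lists_S :: "nat \<Rightarrow> 'a set \<Rightarrow> (nat \<Rightarrow> 'a) set" where
  "lists_S r U = bijs_from r U"

definition lists_T :: "nat \<Rightarrow> ('a \<Rightarrow> 'a) \<Rightarrow> 'a set \<Rightarrow> (nat \<Rightarrow> 'a) \<Rightarrow> (nat \<Rightarrow> 'a)" where
  "lists_T r \<tau> U l = compose {1..r} \<tau> l"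

text \<open>Molecular species X^n/H, H a set of permutations of {1..n}.\<close>
definition lcoset :: "(nat \<Rightarrow> 'a) \<Rightarrow> (nat \<Rightarrow> nat) set \<Rightarrow> (nat \<Rightarrow> 'a) set" where
  "lcoset l H = (\<lambda>f. l \<circ> f) ` H"

definition mol_S :: "nat \<Rightarrow> (nat \<Rightarrow> nat) set \<Rightarrow> 'a set \<Rightarrow> (nat \<Rightarrow> 'a) set set" where
  "mol_S n H U = {lcoset l H | l. l \<in> bijs_from n U}"

definition mol_T :: "nat \<Rightarrow> ('a \<Rightarrow> 'a) \<Rightarrow> 'a set \<Rightarrow> (nat \<Rightarrow> 'a) set \<Rightarrow> (nat \<Rightarrow> 'a) set" where
  "mol_T n \<tau> U c = (\<lambda>\<mu>. compose {1..n} \<tau> \<mu>) ` c"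

text \<open>Standard permutation sigma_alpha: cycles (s+1 ... s+a) filled consecutively.\<close>
fun std_perm_aux :: "nat list \<Rightarrow> nat \<Rightarrow> nat \<Rightarrow> nat" where
  "std_perm_aux [] s i = i"
| "std_perm_aux (a # as) s i =
     (if s < i \<and> i \<le> s + a then (if i = s + a then s + 1 else i + 1)
      else std_perm_aux as (s + a) i)"

definition std_perm :: "nat list \<Rightarrow> nat \<Rightarrow> nat" where
  "std_perm \<alpha> = std_perm_aux \<alpha> 0"

definition is_partition :: "nat \<Rightarrow> nat list \<Rightarrow> bool" where
  "is_partition n \<alpha> \<longleftrightarrow> (\<forall>a\<in>set \<alpha>. 0 < a) \<and> sum_list \<alpha> = n \<and> sorted_wrt (\<ge>) \<alpha>"

text \<open>C_alpha = X^n / <sigma_alpha>.\<close>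
definition cyc_S :: "nat list \<Rightarrow> 'a set \<Rightarrow> (nat \<Rightarrow> 'a) set set" where
  "cyc_S \<alpha> = mol_S (sum_list \<alpha>) (range (\<lambda>k. std_perm \<alpha> ^^ k))"

definition cyc_T :: "nat list \<Rightarrow> ('a \<Rightarrow> 'a) \<Rightarrow> 'a set \<Rightarrow> (nat \<Rightarrow> 'a) set \<Rightarrow> (nat \<Rightarrow> 'a) set" where
  "cyc_T \<alpha> = mol_T (sum_list \<alpha>)"

definition rep_parts :: "nat \<Rightarrow> nat list \<Rightarrow> nat list" where
  "rep_parts r \<alpha> = concat (map (\<lambda>a. replicate r a) \<alpha>)"

text \<open>Composition F o G: set partition pi of U, F-structure on pi, G-structure on each block.\<close>
definition comp_S :: "('a set set \<Rightarrow> 'f set) \<Rightarrow> ('a set \<Rightarrow> 'g set) \<Rightarrow> 'a set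
                      \<Rightarrow> ('a set set \<times> 'f \<times> ('a set \<Rightarrow> 'g)) set" where
  "comp_S SF SG U = {(\<pi>, s, g). partition_on U \<pi> \<and> s \<in> SF \<pi> \<and> g \<in> extensional \<pi> \<and>
                                (\<forall>B\<in>\<pi>. g B \<in> SG B)}"

definition comp_T :: "(('a set \<Rightarrow> 'a set) \<Rightarrow> 'a set set \<Rightarrow> 'f \<Rightarrow> 'f)
     \<Rightarrow> (('a \<Rightarrow> 'a) \<Rightarrow> 'a set \<Rightarrow> 'g \<Rightarrow> 'g) \<Rightarrow> ('a \<Rightarrow> 'a) \<Rightarrow> 'a set
     \<Rightarrow> ('a set set \<times> 'f \<times> ('a set \<Rightarrow> 'g)) \<Rightarrow> ('a set set \<times> 'f \<times> ('a set \<Rightarrow> 'g))" where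
  "comp_T TF TG \<tau> U x = (case x of (\<pi>, s, g) \<Rightarrow>
     ((`) \<tau> ` \<pi>, TF ((`) \<tau>) \<pi> s,
      restrict (\<lambda>B'. let B = the_inv_into \<pi> ((`) \<tau>) B' in TG \<tau> B (g B)) ((`) \<tau> ` \<pi>)))"

end

theory Submission
  imports Defs
begin

text \<open>A \<open>C\<^sub>\<alpha> \<circ> X\<^sup>r\<close>-structure on \<open>U\<close> consists of a partition of \<open>U\<close> into
  \<open>n\<close> blocks, an orbit under \<open>\<langle>\<sigma>\<^sub>\<alpha>\<rangle>\<close> of arrangements \<open>l : [n] \<rightarrow> blocks\<close>, and a
  linear order \<open>g B : [r] \<rightarrow> B\<close> of every block. Number the grid \<open>[n] \<times> [r]\<close> by a
  bijection \<open>e\<close> onto \<open>[nr]\<close> and glue \<open>l\<close> and \<open>g\<close> into the single bijection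
  \<open>e(p, j) \<mapsto> g (l p) j\<close> from \<open>[nr]\<close> onto \<open>U\<close>. Gluing commutes with transport and
  turns right composition by \<open>h\<close> on \<open>[n]\<close> into right composition by the lifted map
  \<open>e(p, j) \<mapsto> e(h p, j)\<close>, so it identifies \<open>(X\<^sup>n/H) \<circ> X\<^sup>r\<close> with
  \<open>X\<^bsup>nr\<^esup>/lift(H)\<close> for every monoid \<open>H\<close> of self-maps of \<open>[n]\<close>. For
  \<open>H = \<langle>\<sigma>\<^sub>\<alpha>\<rangle>\<close> one chooses \<open>e\<close> so that the \<open>r\<close> copies of each cycle of
  \<open>\<sigma>\<^sub>\<alpha>\<close> become consecutive cycles of \<open>\<sigma>\<^bsub>\<alpha>\<^sup>r\<^esub>\<close>; then the lift of
  \<open>\<sigma>\<^sub>\<alpha>\<close> is \<open>\<sigma>\<^bsub>\<alpha>\<^sup>r\<^esub>\<close>.\<close>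

lemma lcoset_comp_subset:
  assumes "h \<in> H" and "\<And>h h'. h \<in> H \<Longrightarrow> h' \<in> H \<Longrightarrow> h \<circ> h' \<in> H"
  shows "lcoset (l \<circ> h) H \<subseteq> lcoset l H"
  using assms by (auto simp: lcoset_def comp_assoc)

lemma mem_lcoset_self: "id \<in> H \<Longrightarrow> l \<in> lcoset l H"
  unfolding lcoset_def by (metis comp_id image_eqI)

lemma funpow_image_subset: "f ` A \<subseteq> A \<Longrightarrow> (f ^^ k) ` A \<subseteq> A"
  by (induction k) (auto simp: image_subset_iff)

lemma funpow_fixpoint: "f x = x \<Longrightarrow> (f ^^ k) x = x"
  by (induction k) auto

lemma bij_betw_partition_glue:
  assumes "partition_on U \<pi>" and "\<And>B. B \<in> \<pi> \<Longrightarrow> bij_betw (g B) I B"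
  shows "bij_betw (\<lambda>(B, j). g B j) (\<pi> \<times> I) U"
proof -
  have "bij_betw (\<lambda>(B, j). g B j) (\<Union>B\<in>\<pi>. {B} \<times> I) (\<Union>B\<in>\<pi>. B)"
  proof (rule bij_betw_UNION_disjoint)
    show "disjoint_family_on (\<lambda>B. B) \<pi>"
      using partition_onD2[OF assms(1)] by (auto simp: disjoint_family_on_def disjoint_def)
    show "bij_betw (\<lambda>(B, j). g B j) ({B} \<times> I) B" if "B \<in> \<pi>" for B
    proof -
      have "(\<lambda>(B', j). g B' j) ` ({B} \<times> I) = g B ` I" by auto
      then show ?thesis
        using assms(2)[OF that] by (auto simp: bij_betw_def inj_on_def)
    qed
  qed
  then show ?thesis
    using partition_onD1[OF assms(1)] by (simp add: Sigma_def)
qed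

lemma mem_comp_mol_lists_iff:
  "x \<in> comp_S (mol_S n H) (lists_S r) U \<longleftrightarrow>
    (\<exists>\<pi> l g. x = (\<pi>, lcoset l H, g) \<and> partition_on U \<pi> \<and> l \<in> bijs_from n \<pi> \<and>
       g \<in> extensional \<pi> \<and> (\<forall>B\<in>\<pi>. g B \<in> bijs_from r B))"
  unfolding comp_S_def mol_S_def lists_S_def by (cases x) (simp, blast)

locale grid_numbering =
  fixes n r N :: nat and e :: "nat \<times> nat \<Rightarrow> nat"
  assumes bij_e: "bij_betw e ({1..n} \<times> {1..r}) {1..N}"
begin

definition coord :: "nat \<Rightarrow> nat \<times> nat" where
  "coord = the_inv_into ({1..n} \<times> {1..r}) e"

definition lift :: "(nat \<Rightarrow> nat) \<Rightarrow> nat \<Rightarrow> nat" where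
  "lift h q = (if q \<in> {1..N} then case coord q of (p, j) \<Rightarrow> e (h p, j) else q)"

definition glue :: "(nat \<Rightarrow> 'b) \<Rightarrow> ('b \<Rightarrow> nat \<Rightarrow> 'c) \<Rightarrow> nat \<Rightarrow> 'c" where
  "glue l g = restrict (\<lambda>q. case coord q of (p, j) \<Rightarrow> g (l p) j) {1..N}"

lemma e_mem: "p \<in> {1..n} \<Longrightarrow> j \<in> {1..r} \<Longrightarrow> e (p, j) \<in> {1..N}"
  using bij_betw_apply[OF bij_e] by blast

lemma coord_e: "p \<in> {1..n} \<Longrightarrow> j \<in> {1..r} \<Longrightarrow> coord (e (p, j)) = (p, j)"
  unfolding coord_def by (rule the_inv_into_f_f[OF bij_betw_imp_inj_on[OF bij_e]]) auto

lemma grid_cases: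
  assumes "q \<in> {1..N}"
  obtains p j where "p \<in> {1..n}" and "j \<in> {1..r}" and "q = e (p, j)"
proof -
  have "q \<in> e ` ({1..n} \<times> {1..r})"
    using assms bij_betw_imp_surj_on[OF bij_e] by simp
  then show thesis
    using that by blast
qed

lemma grid_fun_eqI:
  assumes "\<And>p j. p \<in> {1..n} \<Longrightarrow> j \<in> {1..r} \<Longrightarrow> f (e (p, j)) = f' (e (p, j))"
    and "\<And>q. q \<notin> {1..N} \<Longrightarrow> f q = f' q"
  shows "f = f'"
proof
  fix q
  show "f q = f' q"
  proof (cases "q \<in> {1..N}")
    case True
    then obtain p j where "p \<in> {1..n}" "j \<in> {1..r}" "q = e (p, j)"
      by (rule grid_cases)
    then show ?thesis
      using assms(1) by simp
  qed (rule assms(2))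
qed

lemma glue_e: "p \<in> {1..n} \<Longrightarrow> j \<in> {1..r} \<Longrightarrow> glue l g (e (p, j)) = g (l p) j"
  using e_mem[of p j] by (simp add: glue_def coord_e)

lemma glue_outside: "q \<notin> {1..N} \<Longrightarrow> glue l g q = undefined"
  by (auto simp: glue_def)

lemma lift_e: "p \<in> {1..n} \<Longrightarrow> j \<in> {1..r} \<Longrightarrow> lift h (e (p, j)) = e (h p, j)"
  using e_mem[of p j] by (simp add: lift_def coord_e)

lemma lift_outside: "q \<notin> {1..N} \<Longrightarrow> lift h q = q"
  by (auto simp: lift_def)

lemma lift_comp:
  assumes "h' ` {1..n} \<subseteq> {1..n}"
  shows "lift (h \<circ> h') = lift h \<circ> lift h'"
proof (rule grid_fun_eqI)
  fix p j assume p: "p \<in> {1..n}" and j: "j \<in> {1..r}"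
  moreover have "h' p \<in> {1..n}"
    using assms p by blast
  ultimately show "lift (h \<circ> h') (e (p, j)) = (lift h \<circ> lift h') (e (p, j))"
    by (simp add: lift_e)
qed (simp add: lift_outside)

lemma lift_id: "lift id = id"
  by (rule grid_fun_eqI) (simp_all add: lift_e lift_outside)

lemma lift_funpow:
  assumes "h ` {1..n} \<subseteq> {1..n}"
  shows "lift (h ^^ k) = lift h ^^ k"
proof (induction k)
  case 0
  show ?case by (simp only: funpow.simps(1) lift_id)
next
  case (Suc k)
  have "lift (h ^^ Suc k) = lift (h ^^ k \<circ> h)"
    by (simp only: funpow_Suc_right)
  also have "\<dots> = lift (h ^^ k) \<circ> lift h"
    by (rule lift_comp[OF assms])
  finally show ?case
    by (simp only: Suc.IH funpow_Suc_right)
qed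

lemma glue_comp:
  assumes "h ` {1..n} \<subseteq> {1..n}"
  shows "glue (l \<circ> h) g = glue l g \<circ> lift h"
proof (rule grid_fun_eqI)
  fix p j assume p: "p \<in> {1..n}" and j: "j \<in> {1..r}"
  moreover have "h p \<in> {1..n}"
    using assms p by blast
  ultimately show "glue (l \<circ> h) g (e (p, j)) = (glue l g \<circ> lift h) (e (p, j))"
    by (simp add: glue_e lift_e)
qed (simp add: glue_outside lift_outside)

lemma glue_eq_imp_eq:
  assumes eq: "glue l g = glue l' g'"
    and l: "l \<in> extensional {1..n}" "l ` {1..n} \<subseteq> \<pi>" "\<forall>B\<in>\<pi>. g B \<in> bijs_from r B"
    and l': "l' \<in> extensional {1..n}" "l' ` {1..n} \<subseteq> \<pi>'" "\<forall>B\<in>\<pi>'. g' B \<in> bijs_from r B"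
  shows "l = l'" and "\<forall>p\<in>{1..n}. g (l p) = g' (l p)"
proof -
  have val: "g (l p) j = g' (l' p) j" if "p \<in> {1..n}" "j \<in> {1..r}" for p j
    using arg_cong[OF eq, of "\<lambda>f. f (e (p, j))"] that by (simp add: glue_e)
  have lists: "g (l p) \<in> bijs_from r (l p)" "g' (l' p) \<in> bijs_from r (l' p)" if "p \<in> {1..n}" for p
    using l(2,3) l'(2,3) that by (auto simp: image_subset_iff)
  have same_block: "l p = l' p" if p: "p \<in> {1..n}" for p
  proof -
    have "l p = g (l p) ` {1..r}"
      using lists(1)[OF p] by (simp add: bijs_from_def bij_betw_def)
    also have "\<dots> = g' (l' p) ` {1..r}"
      using val[OF p] by (rule image_cong[OF refl])
    also have "\<dots> = l' p"
      using lists(2)[OF p] by (simp add: bijs_from_def bij_betw_def)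
    finally show ?thesis .
  qed
  show "l = l'"
    using same_block l(1) l'(1) by (rule extensionalityI[rotated 2]) auto
  show "\<forall>p\<in>{1..n}. g (l p) = g' (l p)"
  proof
    fix p assume p: "p \<in> {1..n}"
    show "g (l p) = g' (l p)"
    proof (rule extensionalityI)
      show "g (l p) \<in> extensional {1..r}" and "g' (l p) \<in> extensional {1..r}"
        using lists[OF p] same_block[OF p] by (simp_all add: bijs_from_def)
      show "g (l p) j = g' (l p) j" if "j \<in> {1..r}" for j
        using val[OF p that] same_block[OF p] by simp
    qed
  qed
qed

lemma glue_transport:
  assumes inj: "inj_on ((`) \<tau>) \<pi>" and \<mu>: "\<mu> ` {1..n} \<subseteq> \<pi>"
  shows "glue (compose {1..n} ((`) \<tau>) \<mu>)
      (restrict (\<lambda>B'. let B = the_inv_into \<pi> ((`) \<tau>) B' in lists_T r \<tau> B (g B)) ((`) \<tau> ` \<pi>))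
    = compose {1..N} \<tau> (glue \<mu> g)"
    (is "glue ?\<mu>' ?g' = _")
proof (rule grid_fun_eqI)
  fix p j assume p: "p \<in> {1..n}" and j: "j \<in> {1..r}"
  have "\<mu> p \<in> \<pi>"
    using \<mu> p by blast
  then have "?g' (\<tau> ` \<mu> p) = lists_T r \<tau> (\<mu> p) (g (\<mu> p))"
    by (simp add: the_inv_into_f_f[OF inj] Let_def)
  then show "glue ?\<mu>' ?g' (e (p, j)) = compose {1..N} \<tau> (glue \<mu> g) (e (p, j))"
    using p j e_mem[OF p j] by (simp add: glue_e lists_T_def compose_def)
qed (auto simp: glue_outside compose_def)

lemma glue_mem_bijs_from:
  assumes "partition_on U \<pi>" and "l \<in> bijs_from n \<pi>" and "\<forall>B\<in>\<pi>. g B \<in> bijs_from r B"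
  shows "glue l g \<in> bijs_from N U"
proof -
  have "bij_betw (\<lambda>(B, j). g B j) (\<pi> \<times> {1..r}) U"
    using assms(1,3) by (intro bij_betw_partition_glue) (auto simp: bijs_from_def)
  moreover have "bij_betw (map_prod l id) ({1..n} \<times> {1..r}) (\<pi> \<times> {1..r})"
    using assms(2) by (intro bij_betw_map_prod) (auto simp: bijs_from_def)
  moreover have "bij_betw coord {1..N} ({1..n} \<times> {1..r})"
    unfolding coord_def by (rule bij_betw_the_inv_into[OF bij_e])
  ultimately have "bij_betw ((\<lambda>(B, j). g B j) \<circ> map_prod l id \<circ> coord) {1..N} U"
    by (metis bij_betw_trans)
  then have "bij_betw (glue l g) {1..N} U"
    by (rule bij_betw_cong[THEN iffD1, rotated])
      (auto simp: glue_def split: prod.split)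
  then show ?thesis
    by (simp add: bijs_from_def glue_def)
qed

lemma bij_betw_comp_e:
  assumes "\<Lambda> \<in> bijs_from N U"
  shows "bij_betw (\<Lambda> \<circ> e) ({1..n} \<times> {1..r}) U"
proof -
  have "bij_betw \<Lambda> {1..N} U"
    using assms by (simp add: bijs_from_def)
  then show ?thesis
    by (rule bij_betw_trans[OF bij_e])
qed

definition block :: "(nat \<Rightarrow> 'b) \<Rightarrow> nat \<Rightarrow> 'b set" where
  "block \<Lambda> p = (\<lambda>j. \<Lambda> (e (p, j))) ` {1..r}"

definition block_list :: "(nat \<Rightarrow> 'b) \<Rightarrow> 'b set \<Rightarrow> nat \<Rightarrow> 'b" where
  "block_list \<Lambda> = restrict
     (\<lambda>B. restrict (\<lambda>j. \<Lambda> (e (the_inv_into {1..n} (block \<Lambda>) B, j))) {1..r})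
     (block \<Lambda> ` {1..n})"

context
  fixes \<Lambda> :: "nat \<Rightarrow> 'b" and U :: "'b set"
  assumes \<Lambda>: "\<Lambda> \<in> bijs_from N U" and r_pos: "1 \<le> r"
begin

lemma grid_values_inj:
  assumes "p \<in> {1..n}" "j \<in> {1..r}" "p' \<in> {1..n}" "j' \<in> {1..r}"
    and "\<Lambda> (e (p, j)) = \<Lambda> (e (p', j'))"
  shows "p = p' \<and> j = j'"
proof -
  have "(p, j) = (p', j')"
    using assms inj_onD[OF bij_betw_imp_inj_on[OF bij_betw_comp_e[OF \<Lambda>]], of "(p, j)" "(p', j')"]
    by simp
  then show ?thesis by simp
qed

lemma block_eq_image: "block \<Lambda> p = (\<Lambda> \<circ> e) ` ({p} \<times> {1..r})"
  by (auto simp: block_def)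

lemma inj_on_block: "inj_on (block \<Lambda>) {1..n}"
proof (rule inj_onI)
  fix p p' assume p: "p \<in> {1..n}" "p' \<in> {1..n}" and eq: "block \<Lambda> p = block \<Lambda> p'"
  have "\<Lambda> (e (p, 1)) \<in> block \<Lambda> p'"
    using eq r_pos by (auto simp: block_def)
  then obtain j where "j \<in> {1..r}" and "\<Lambda> (e (p, 1)) = \<Lambda> (e (p', j))"
    by (auto simp: block_def)
  with p r_pos show "p = p'"
    using grid_values_inj by (metis atLeastAtMost_iff order_refl)
qed

lemma partition_on_blocks: "partition_on U (block \<Lambda> ` {1..n})"
proof -
  have rows: "partition_on ({1..n} \<times> {1..r}) ((\<lambda>p. {p} \<times> {1..r}) ` {1..n})"
    using r_pos by (intro partition_onI) (auto simp: disjnt_def dest!: sym[of "{}"])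
  have "partition_on ((\<Lambda> \<circ> e) ` ({1..n} \<times> {1..r}))
      ((`) (\<Lambda> \<circ> e) ` (\<lambda>p. {p} \<times> {1..r}) ` {1..n} - {{}})"
    by (rule partition_on_inj_image[OF rows bij_betw_imp_inj_on[OF bij_betw_comp_e[OF \<Lambda>]]])
  moreover have "(`) (\<Lambda> \<circ> e) ` (\<lambda>p. {p} \<times> {1..r}) ` {1..n} - {{}} = block \<Lambda> ` {1..n}"
    using r_pos by (auto simp: block_eq_image image_image)
  ultimately show ?thesis
    using bij_betw_imp_surj_on[OF bij_betw_comp_e[OF \<Lambda>]] by simp
qed

lemma block_list_block:
  "p \<in> {1..n} \<Longrightarrow> block_list \<Lambda> (block \<Lambda> p) = restrict (\<lambda>j. \<Lambda> (e (p, j))) {1..r}"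
  using the_inv_into_f_f[OF inj_on_block] by (simp add: block_list_def)

lemma block_list_mem_bijs_from: "\<forall>B \<in> block \<Lambda> ` {1..n}. block_list \<Lambda> B \<in> bijs_from r B"
proof
  fix B assume "B \<in> block \<Lambda> ` {1..n}"
  then obtain p where p: "p \<in> {1..n}" and B: "B = block \<Lambda> p" by blast
  have "inj_on (\<lambda>j. \<Lambda> (e (p, j))) {1..r}"
    using grid_values_inj[OF p _ p] by (auto intro: inj_onI)
  then have "bij_betw (restrict (\<lambda>j. \<Lambda> (e (p, j))) {1..r}) {1..r} B"
    by (simp add: B block_def bij_betw_def)
  then show "block_list \<Lambda> B \<in> bijs_from r B"
    by (simp add: bijs_from_def B block_list_block[OF p])
qed

lemma glue_block_list: "glue (restrict (block \<Lambda>) {1..n}) (block_list \<Lambda>) = \<Lambda>"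
  using \<Lambda> by (intro grid_fun_eqI) (simp_all add: glue_e block_list_block glue_outside bijs_from_def extensional_def)

end

end

locale lifted_monoid = grid_numbering +
  fixes H :: "(nat \<Rightarrow> nat) set"
  assumes id_mem: "id \<in> H"
    and comp_mem: "\<And>h h'. h \<in> H \<Longrightarrow> h' \<in> H \<Longrightarrow> h \<circ> h' \<in> H"
    and maps_into: "\<And>h. h \<in> H \<Longrightarrow> h ` {1..n} \<subseteq> {1..n}"
    and fixes_outside: "\<And>h x. h \<in> H \<Longrightarrow> x \<notin> {1..n} \<Longrightarrow> h x = x"
    \<comment> \<open>so that \<open>l \<circ> h\<close> stays extensional on \<open>{1..n}\<close>, like the bijections in \<open>bijs_from\<close>\<close>
begin

definition glue_class :: "'b set set \<times> (nat \<Rightarrow> 'b set) set \<times> ('b set \<Rightarrow> nat \<Rightarrow> 'b)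
    \<Rightarrow> (nat \<Rightarrow> 'b) set" where
  "glue_class x = (case x of (\<pi>, c, g) \<Rightarrow> (\<lambda>\<mu>. glue \<mu> g) ` c)"

lemma glue_class_lcoset: "glue_class (\<pi>, lcoset l H, g) = lcoset (glue l g) (lift ` H)"
proof -
  have "glue_class (\<pi>, lcoset l H, g) = (\<lambda>h. glue (l \<circ> h) g) ` H"
    by (simp add: glue_class_def lcoset_def image_image)
  also have "\<dots> = (\<lambda>h. glue l g \<circ> lift h) ` H"
    by (rule image_cong[OF refl glue_comp[OF maps_into]])
  finally show ?thesis
    by (simp add: lcoset_def image_image)
qed

lemma glue_class_mem_mol_S:
  assumes "x \<in> comp_S (mol_S n H) (lists_S r) U"
  shows "glue_class x \<in> mol_S N (lift ` H) U"
proof -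
  obtain \<pi> l g where "x = (\<pi>, lcoset l H, g)" and "partition_on U \<pi>" and "l \<in> bijs_from n \<pi>"
    and "\<forall>B\<in>\<pi>. g B \<in> bijs_from r B"
    using assms mem_comp_mol_lists_iff by blast
  then have "glue l g \<in> bijs_from N U" and "glue_class x = lcoset (glue l g) (lift ` H)"
    by (simp_all add: glue_mem_bijs_from glue_class_lcoset)
  then show ?thesis
    unfolding mol_S_def by blast
qed

lemma glue_class_surj:
  assumes "1 \<le> r" and "c \<in> mol_S N (lift ` H) U"
  shows "c \<in> glue_class ` comp_S (mol_S n H) (lists_S r) U"
proof -
  obtain \<Lambda> where \<Lambda>: "\<Lambda> \<in> bijs_from N U" and c: "c = lcoset \<Lambda> (lift ` H)"
    using assms(2) by (auto simp: mol_S_def)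
  let ?x = "(block \<Lambda> ` {1..n}, lcoset (restrict (block \<Lambda>) {1..n}) H, block_list \<Lambda>)"
  have "restrict (block \<Lambda>) {1..n} \<in> bijs_from n (block \<Lambda> ` {1..n})"
    using inj_on_imp_bij_betw[OF inj_on_block[OF \<Lambda> assms(1)]] by (simp add: bijs_from_def)
  moreover have "block_list \<Lambda> \<in> extensional (block \<Lambda> ` {1..n})"
    by (simp add: block_list_def)
  ultimately have "?x \<in> comp_S (mol_S n H) (lists_S r) U"
    unfolding mem_comp_mol_lists_iff
    using partition_on_blocks[OF \<Lambda> assms(1)] block_list_mem_bijs_from[OF \<Lambda> assms(1)]
    by blast
  moreover have "glue_class ?x = c"
    by (simp only: glue_class_lcoset glue_block_list[OF \<Lambda> assms(1)] c)
  ultimately show ?thesis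
    by blast
qed

lemma glue_class_subset:
  assumes l: "l \<in> bijs_from n \<pi>" "\<forall>B\<in>\<pi>. g B \<in> bijs_from r B"
    and l': "l' \<in> bijs_from n \<pi>'" "\<forall>B\<in>\<pi>'. g' B \<in> bijs_from r B"
    and mem: "glue l g \<in> lcoset (glue l' g') (lift ` H)"
  shows "\<pi> \<subseteq> \<pi>'" and "lcoset l H \<subseteq> lcoset l' H" and "\<forall>B\<in>\<pi>. g B = g' B"
proof -
  obtain h where h: "h \<in> H" and "glue l g = glue l' g' \<circ> lift h"
    using mem by (auto simp: lcoset_def)
  then have eq: "glue l g = glue (l' \<circ> h) g'"
    by (simp only: glue_comp[OF maps_into[OF h]])
  have \<pi>: "\<pi> = l ` {1..n}" and \<pi>': "\<pi>' = l' ` {1..n}"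
    using l(1) l'(1) by (simp_all add: bijs_from_def bij_betw_def)
  have "l' \<circ> h \<in> extensional {1..n}"
    using l'(1) fixes_outside[OF h] by (auto simp: bijs_from_def extensional_def)
  moreover have h_into: "(l' \<circ> h) ` {1..n} \<subseteq> \<pi>'"
    using maps_into[OF h] \<pi>' by auto
  moreover have "l \<in> extensional {1..n}"
    using l(1) by (simp add: bijs_from_def)
  ultimately have l_eq: "l = l' \<circ> h" and g_eq: "\<forall>p\<in>{1..n}. g (l p) = g' (l p)"
    using glue_eq_imp_eq[OF eq _ _ l(2) _ _ l'(2)] \<pi> by auto
  show "\<pi> \<subseteq> \<pi>'"
    using h_into \<pi> l_eq by simp
  show "lcoset l H \<subseteq> lcoset l' H"
    using lcoset_comp_subset[OF h comp_mem] l_eq by simp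
  show "\<forall>B\<in>\<pi>. g B = g' B"
    using g_eq \<pi> by blast
qed

lemma glue_class_inj: "inj_on glue_class (comp_S (mol_S n H) (lists_S r) U)"
proof (rule inj_onI)
  fix x y
  assume "x \<in> comp_S (mol_S n H) (lists_S r) U" and "y \<in> comp_S (mol_S n H) (lists_S r) U"
    and eq: "glue_class x = glue_class y"
  then obtain \<pi> l g \<pi>' l' g' where x: "x = (\<pi>, lcoset l H, g)" and y: "y = (\<pi>', lcoset l' H, g')"
    and l: "l \<in> bijs_from n \<pi>" "g \<in> extensional \<pi>" "\<forall>B\<in>\<pi>. g B \<in> bijs_from r B"
    and l': "l' \<in> bijs_from n \<pi>'" "g' \<in> extensional \<pi>'" "\<forall>B\<in>\<pi>'. g' B \<in> bijs_from r B"
    unfolding mem_comp_mol_lists_iff by blast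
  have cosets: "lcoset (glue l g) (lift ` H) = lcoset (glue l' g') (lift ` H)"
    using eq by (simp add: x y glue_class_lcoset)
  have "id \<in> lift ` H"
    using id_mem lift_id by (metis image_eqI)
  then have self: "f \<in> lcoset f (lift ` H)" for f
    by (rule mem_lcoset_self)
  have mem: "glue l g \<in> lcoset (glue l' g') (lift ` H)" "glue l' g' \<in> lcoset (glue l g) (lift ` H)"
    using self[of "glue l g"] self[of "glue l' g'"] by (simp_all only: cosets)
  note sub = glue_class_subset[OF l(1,3) l'(1,3) mem(1)] glue_class_subset[OF l'(1,3) l(1,3) mem(2)]
  have "\<pi> = \<pi>'" and "lcoset l H = lcoset l' H"
    using sub(1,2,4,5) by auto
  moreover have "g = g'"
    by (rule extensionalityI[OF l(2)]) (use l'(2) sub(3) \<open>\<pi> = \<pi>'\<close> in auto)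
  ultimately show "x = y"
    by (simp add: x y)
qed

lemma glue_class_natural:
  assumes \<tau>: "bij_betw \<tau> U V" and x: "x \<in> comp_S (mol_S n H) (lists_S r) U"
  shows "glue_class (comp_T (mol_T n) (lists_T r) \<tau> U x) = mol_T N \<tau> U (glue_class x)"
proof -
  obtain \<pi> l g where x_eq: "x = (\<pi>, lcoset l H, g)" and P: "partition_on U \<pi>"
    and l: "l \<in> bijs_from n \<pi>"
    using x mem_comp_mol_lists_iff by blast
  have inj: "inj_on ((`) \<tau>) \<pi>"
    using bij_betw_imp_inj_on[OF \<tau>] partition_onD1[OF P] by (simp add: inj_on_image)
  have into: "\<mu> ` {1..n} \<subseteq> \<pi>" if \<mu>: "\<mu> \<in> lcoset l H" for \<mu>
  proof -
    obtain h where "h \<in> H" and "\<mu> = l \<circ> h"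
      using \<mu> unfolding lcoset_def by blast
    then show ?thesis
      using maps_into l by (auto simp: bijs_from_def bij_betw_def)
  qed
  define g' where "g' = restrict
    (\<lambda>B'. let B = the_inv_into \<pi> ((`) \<tau>) B' in lists_T r \<tau> B (g B)) ((`) \<tau> ` \<pi>)"
  have "glue_class (comp_T (mol_T n) (lists_T r) \<tau> U x)
      = (\<lambda>\<mu>. glue (compose {1..n} ((`) \<tau>) \<mu>) g') ` lcoset l H"
    by (simp add: x_eq comp_T_def mol_T_def glue_class_def image_image g'_def)
  also have "\<dots> = (\<lambda>\<mu>. compose {1..N} \<tau> (glue \<mu> g)) ` lcoset l H"
    unfolding g'_def by (rule image_cong[OF refl glue_transport[OF inj into]])
  also have "\<dots> = mol_T N \<tau> U (glue_class x)"
    by (simp add: x_eq mol_T_def glue_class_def image_image)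
  finally show ?thesis .
qed

theorem comp_lists_nat_iso:
  assumes "1 \<le> r"
  shows "nat_iso (comp_S (mol_S n H) (lists_S r) :: 'b set \<Rightarrow> _) (comp_T (mol_T n) (lists_T r))
    (mol_S N (lift ` H)) (mol_T N)"
proof -
  have "bij_betw glue_class (comp_S (mol_S n H) (lists_S r) U) (mol_S N (lift ` H) U)"
    for U :: "'b set"
    unfolding bij_betw_def
    using glue_class_inj glue_class_mem_mol_S glue_class_surj[OF assms] by blast
  then show ?thesis
    unfolding nat_iso_def using glue_class_natural by (intro exI[of _ "\<lambda>_. glue_class"]) blast
qed

end

context grid_numbering
begin

lemma lifted_monoid_powers:
  assumes "s ` {1..n} \<subseteq> {1..n}" and "\<And>x. x \<notin> {1..n} \<Longrightarrow> s x = x"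
  shows "lifted_monoid n r N e (range (\<lambda>k. s ^^ k))"
proof
  show "id \<in> range (\<lambda>k. s ^^ k)"
    by (metis funpow.simps(1) range_eqI)
  show "h \<circ> h' \<in> range (\<lambda>k. s ^^ k)" if "h \<in> range (\<lambda>k. s ^^ k)" "h' \<in> range (\<lambda>k. s ^^ k)" for h h'
    using that by (auto simp: funpow_add[symmetric])
  show "h ` {1..n} \<subseteq> {1..n}" if "h \<in> range (\<lambda>k. s ^^ k)" for h
    using that funpow_image_subset[OF assms(1)] by blast
  show "h x = x" if "h \<in> range (\<lambda>k. s ^^ k)" "x \<notin> {1..n}" for h x
    using that funpow_fixpoint[of s x] assms(2) by blast
qed

corollary comp_lists_cyclic_nat_iso:
  assumes "1 \<le> r" and s: "s ` {1..n} \<subseteq> {1..n}" "\<And>x. x \<notin> {1..n} \<Longrightarrow> s x = x"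
    and t: "\<And>p j. p \<in> {1..n} \<Longrightarrow> j \<in> {1..r} \<Longrightarrow> t (e (p, j)) = e (s p, j)"
      "\<And>q. q \<notin> {1..N} \<Longrightarrow> t q = q"
  shows "nat_iso (comp_S (mol_S n (range (\<lambda>k. s ^^ k))) (lists_S r) :: 'b set \<Rightarrow> _)
    (comp_T (mol_T n) (lists_T r)) (mol_S N (range (\<lambda>k. t ^^ k))) (mol_T N)"
proof -
  have "lift s = t"
    by (rule grid_fun_eqI) (simp_all add: lift_e lift_outside t)
  then have "lift ` range (\<lambda>k. s ^^ k) = range (\<lambda>k. t ^^ k)"
    using lift_funpow[OF s(1)] by (simp add: image_image)
  then show ?thesis
    using lifted_monoid.comp_lists_nat_iso[OF lifted_monoid_powers[OF s] assms(1)] by simp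
qed

end

lemma std_perm_aux_outside: "i \<le> s \<or> s + sum_list \<alpha> < i \<Longrightarrow> std_perm_aux \<alpha> s i = i"
  by (induction \<alpha> arbitrary: s) auto

lemma std_perm_aux_mem:
  "s < i \<Longrightarrow> i \<le> s + sum_list \<alpha> \<Longrightarrow> s < std_perm_aux \<alpha> s i \<and> std_perm_aux \<alpha> s i \<le> s + sum_list \<alpha>"
proof (induction \<alpha> arbitrary: s)
  case (Cons a as)
  show ?case
  proof (cases "i \<le> s + a")
    case False
    then show ?thesis
      using Cons.IH[of "s + a"] Cons.prems by (auto simp: add.assoc)
  qed (use Cons.prems in auto)
qed simp

lemma std_perm_aux_append:
  "std_perm_aux (xs @ ys) s i =
    (if s < i \<and> i \<le> s + sum_list xs then std_perm_aux xs s i else std_perm_aux ys (s + sum_list xs) i)"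
  by (induction xs arbitrary: s) (auto simp: add.assoc)

lemma std_perm_aux_replicate:
  "j < r \<Longrightarrow> 1 \<le> t \<Longrightarrow> t \<le> a \<Longrightarrow>
    std_perm_aux (replicate r a) s (s + j * a + t) = s + j * a + (if t = a then 1 else t + 1)"
proof (induction r arbitrary: s j)
  case (Suc r)
  show ?case
  proof (cases j)
    case (Suc j')
    have "std_perm_aux (replicate (Suc r) a) s (s + j * a + t)
        = std_perm_aux (replicate r a) (s + a) ((s + a) + j' * a + t)"
      using Suc \<open>1 \<le> t\<close> by (simp add: algebra_simps)
    also have "\<dots> = (s + a) + j' * a + (if t = a then 1 else t + 1)"
      using Suc.IH[of j' "s + a"] Suc.prems Suc by simp
    finally show ?thesis
      using Suc by simp
  qed (use Suc.prems in auto)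
qed simp

lemma std_perm_mem: "p \<in> {1..sum_list \<alpha>} \<Longrightarrow> std_perm \<alpha> p \<in> {1..sum_list \<alpha>}"
  using std_perm_aux_mem[of 0 p \<alpha>] by (simp add: std_perm_def)

lemma std_perm_outside: "x \<notin> {1..sum_list \<alpha>} \<Longrightarrow> std_perm \<alpha> x = x"
  using std_perm_aux_outside[of x 0 \<alpha>] by (auto simp: std_perm_def)

lemma sum_list_rep_parts: "sum_list (rep_parts r \<alpha>) = r * sum_list \<alpha>"
  by (induction \<alpha>) (auto simp: rep_parts_def sum_list_replicate algebra_simps)

lemma rep_parts_Cons: "rep_parts r (a # as) = replicate r a @ rep_parts r as"
  by (simp add: rep_parts_def)

text \<open>The \<open>r\<close> copies of a part \<open>(s, s + a]\<close> of \<open>\<alpha>\<close> occupy \<open>(r s, r (s + a)]\<close> in \<open>\<alpha>\<^sup>r\<close>;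
  \<open>rep_pos r \<alpha> 0 p j\<close> is the position of \<open>p\<close> in the \<open>j\<close>-th copy of its part.\<close>

fun rep_pos :: "nat \<Rightarrow> nat list \<Rightarrow> nat \<Rightarrow> nat \<Rightarrow> nat \<Rightarrow> nat" where
  "rep_pos r [] s p j = 0"
| "rep_pos r (a # as) s p j =
    (if s < p \<and> p \<le> s + a then r * s + (j - 1) * a + (p - s) else rep_pos r as (s + a) p j)"

lemma copy_pos_bounds:
  fixes s p a j r :: nat
  assumes "s < p" "p \<le> s + a" "1 \<le> j" "j \<le> r"
  shows "r * s < r * s + (j - 1) * a + (p - s) \<and> r * s + (j - 1) * a + (p - s) \<le> r * (s + a)"
proof -
  obtain i where "j = Suc i"
    using assms(3) by (auto dest: Suc_le_D)
  then have "(j - 1) * a + a = j * a"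
    by simp
  also have "\<dots> \<le> r * a"
    using assms(4) by simp
  finally have "(j - 1) * a + a \<le> r * a" .
  moreover have "r * (s + a) = r * s + r * a"
    by (simp add: algebra_simps)
  ultimately show ?thesis
    using assms(1,2) by linarith
qed

lemma rep_pos_bounds:
  "s < p \<Longrightarrow> p \<le> s + sum_list \<alpha> \<Longrightarrow> 1 \<le> j \<Longrightarrow> j \<le> r \<Longrightarrow>
    r * s < rep_pos r \<alpha> s p j \<and> rep_pos r \<alpha> s p j \<le> r * (s + sum_list \<alpha>)"
proof (induction \<alpha> arbitrary: s)
  case (Cons a as)
  show ?case
  proof (cases "p \<le> s + a")
    case True
    then show ?thesis
      using copy_pos_bounds[of s p a j r] Cons.prems by (simp add: algebra_simps)
  next
    case False
    then have "rep_pos r (a # as) s p j = rep_pos r as (s + a) p j"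
      by simp
    moreover have "r * (s + a) < rep_pos r as (s + a) p j"
      and "rep_pos r as (s + a) p j \<le> r * (s + sum_list (a # as))"
      using Cons.IH[of "s + a"] Cons.prems False by (simp_all add: add.assoc)
    moreover have "r * s \<le> r * (s + a)"
      by simp
    ultimately show ?thesis
      by linarith
  qed
qed simp

lemma mult_add_eq_imp_eq:
  fixes x y u v a :: nat
  assumes "x * a + u = y * a + v" and "u < a" and "v < a"
  shows "x = y \<and> u = v"
proof -
  have "(x * a + u) div a = x" and "(y * a + v) div a = y"
    using assms(2,3) by simp_all
  moreover have "(x * a + u) mod a = u" and "(y * a + v) mod a = v"
    using assms(2,3) by simp_all
  ultimately show ?thesis
    using assms(1) by metis
qed

lemma rep_pos_inj:
  assumes "s < p" "p \<le> s + sum_list \<alpha>" "s < p'" "p' \<le> s + sum_list \<alpha>"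
    and "1 \<le> j" "j \<le> r" "1 \<le> j'" "j' \<le> r"
    and "rep_pos r \<alpha> s p j = rep_pos r \<alpha> s p' j'"
  shows "p = p' \<and> j = j'"
  using assms
proof (induction \<alpha> arbitrary: s)
  case (Cons a as)
  have tail: "r * (s + a) < rep_pos r as (s + a) q i"
    if "s + a < q" "q \<le> s + sum_list (a # as)" "1 \<le> i" "i \<le> r" for q i
    using rep_pos_bounds[of "s + a" q as i r] that by (simp add: add.assoc)
  consider "p \<le> s + a" "p' \<le> s + a" | "p \<le> s + a" "\<not> p' \<le> s + a" | "\<not> p \<le> s + a" "p' \<le> s + a"
    | "\<not> p \<le> s + a" "\<not> p' \<le> s + a"
    by blast
  then show ?case
  proof cases
    case 1
    then have "(j - 1) * a + (p - s - 1) = (j' - 1) * a + (p' - s - 1)"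
      using Cons.prems by simp
    then have "j - 1 = j' - 1 \<and> p - s - 1 = p' - s - 1"
      by (rule mult_add_eq_imp_eq) (use 1 Cons.prems in auto)
    then show ?thesis
      using Cons.prems by auto
  next
    case 2
    then show ?thesis
      using copy_pos_bounds[of s p a j r] tail[of p' j'] Cons.prems by simp
  next
    case 3
    then show ?thesis
      using copy_pos_bounds[of s p' a j' r] tail[of p j] Cons.prems by simp
  next
    case 4
    then show ?thesis
      using Cons.IH[of "s + a"] Cons.prems by (auto simp: add.assoc)
  qed
qed simp

lemma std_perm_aux_rep_pos:
  "s < p \<Longrightarrow> p \<le> s + sum_list \<alpha> \<Longrightarrow> 1 \<le> j \<Longrightarrow> j \<le> r \<Longrightarrow>
    std_perm_aux (rep_parts r \<alpha>) (r * s) (rep_pos r \<alpha> s p j) = rep_pos r \<alpha> s (std_perm_aux \<alpha> s p) j"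
proof (induction \<alpha> arbitrary: s)
  case (Cons a as)
  show ?case
  proof (cases "p \<le> s + a")
    case True
    have "std_perm_aux (rep_parts r (a # as)) (r * s) (rep_pos r (a # as) s p j)
        = std_perm_aux (replicate r a) (r * s) (r * s + (j - 1) * a + (p - s))"
      using True Cons.prems copy_pos_bounds[of s p a j r]
      by (simp add: rep_parts_Cons std_perm_aux_append sum_list_replicate algebra_simps)
    also have "\<dots> = r * s + (j - 1) * a + (if p - s = a then 1 else p - s + 1)"
      by (rule std_perm_aux_replicate) (use True Cons.prems in auto)
    also have "\<dots> = rep_pos r (a # as) s (std_perm_aux (a # as) s p) j"
      using True Cons.prems by auto
    finally show ?thesis .
  next
    case False
    then have "std_perm_aux (rep_parts r (a # as)) (r * s) (rep_pos r (a # as) s p j)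
        = std_perm_aux (rep_parts r as) (r * (s + a)) (rep_pos r as (s + a) p j)"
      using rep_pos_bounds[of "s + a" p as j r] Cons.prems
      by (simp add: rep_parts_Cons std_perm_aux_append sum_list_replicate algebra_simps)
    also have "\<dots> = rep_pos r as (s + a) (std_perm_aux as (s + a) p) j"
      using Cons.IH[of "s + a"] False Cons.prems by (simp add: add.assoc)
    also have "\<dots> = rep_pos r (a # as) s (std_perm_aux (a # as) s p) j"
      using std_perm_aux_mem[of "s + a" p as] False Cons.prems by (simp add: add.assoc)
    finally show ?thesis .
  qed
qed simp

lemma std_perm_rep_parts:
  "p \<in> {1..sum_list \<alpha>} \<Longrightarrow> j \<in> {1..r} \<Longrightarrow>
    std_perm (rep_parts r \<alpha>) (rep_pos r \<alpha> 0 p j) = rep_pos r \<alpha> 0 (std_perm \<alpha> p) j"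
  using std_perm_aux_rep_pos[of 0 p \<alpha> j r] by (simp add: std_perm_def)

lemma rep_pos_bij:
  "bij_betw (\<lambda>(p, j). rep_pos r \<alpha> 0 p j) ({1..sum_list \<alpha>} \<times> {1..r}) {1..sum_list (rep_parts r \<alpha>)}"
proof -
  let ?e = "\<lambda>(p, j). rep_pos r \<alpha> 0 p j"
  have inj: "inj_on ?e ({1..sum_list \<alpha>} \<times> {1..r})"
  proof (rule inj_onI, clarify)
    fix p j p' j'
    assume "p \<in> {1..sum_list \<alpha>}" "j \<in> {1..r}" "p' \<in> {1..sum_list \<alpha>}" "j' \<in> {1..r}"
      and "rep_pos r \<alpha> 0 p j = rep_pos r \<alpha> 0 p' j'"
    then show "p = p' \<and> j = j'"
      using rep_pos_inj[of 0 p \<alpha> p' j r j'] by simp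
  qed
  moreover have "?e ` ({1..sum_list \<alpha>} \<times> {1..r}) \<subseteq> {1..sum_list (rep_parts r \<alpha>)}"
    using rep_pos_bounds[of 0 _ \<alpha> _ r] by (auto simp: sum_list_rep_parts Suc_le_eq)
  moreover have "card (?e ` ({1..sum_list \<alpha>} \<times> {1..r})) = card {1..sum_list (rep_parts r \<alpha>)}"
    using card_image[OF inj] by (simp add: card_cartesian_product sum_list_rep_parts)
  ultimately show ?thesis
    by (simp add: bij_betw_def card_subset_eq)
qed

theorem mainTheorem1:
  fixes \<alpha> :: "nat list" and n r :: nat
  assumes "is_partition n \<alpha>" and "1 \<le> r"
  shows "nat_iso (comp_S (cyc_S \<alpha>) (lists_S r) :: 'a set \<Rightarrow> _)
                 (comp_T (cyc_T \<alpha>) (lists_T r))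
                 (cyc_S (rep_parts r \<alpha>)) (cyc_T (rep_parts r \<alpha>))"
proof -
  interpret grid_numbering "sum_list \<alpha>" r "sum_list (rep_parts r \<alpha>)" "\<lambda>(p, j). rep_pos r \<alpha> 0 p j"
    by unfold_locales (rule rep_pos_bij)
  have "nat_iso (comp_S (mol_S (sum_list \<alpha>) (range (\<lambda>k. std_perm \<alpha> ^^ k))) (lists_S r) :: 'a set \<Rightarrow> _)
      (comp_T (mol_T (sum_list \<alpha>)) (lists_T r))
      (mol_S (sum_list (rep_parts r \<alpha>)) (range (\<lambda>k. std_perm (rep_parts r \<alpha>) ^^ k)))
      (mol_T (sum_list (rep_parts r \<alpha>)))"
    using assms(2) std_perm_mem std_perm_outside std_perm_rep_parts
    by (intro comp_lists_cyclic_nat_iso) auto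
  then show ?thesis
    unfolding cyc_S_def cyc_T_def .
qed

end
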